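(* Let $(A,B)$ be a Katsura pair with $B\in M_N(\{0,1\})$ and KEP-action $(G_B,E_A)$. For $\mu,\nu\in E_A^{-\infty}$, $\mu\sim_e\nu$ if and only if either $\mu=\nu$, or there is $K<0$ such that $s(\mu_k)=s(\nu_k)=:v_k$ for all $k\le K$ and $B_{v_{k-1},v_k}=1$ for all $k\le K$, and, if $K<-1$, $B_{v_K,v_{K+1}}=0$ and $\mu_{K+1}\cdots\mu_{-1}=\nu_{K+1}\cdots\nu_{-1}$.
   Context: Katsura pair: $N\in\mathbb{N}$, $A\in M_N(\mathbb{N})$ (nonnegative integers), $B\in M_N(\mathbb{Z})$ with $A_{ij}=0\Rightarrow B_{ij}=0$. Graph $E_A$: vertices $\{1,\dots,N\}$, edges $e_{i,j,m}$ ($0\le m<A_{ij}$), $r=i$, $s=j$. $E_A^{-\infty}$ is the set of left-infinite paths $\mu=\cdots\mu_{-2}\mu_{-1}$ with $s(\mu_k)=r(\mu_{k+1})$ (so $r(\mu_k)=s(\mu_{k-1})$). The group bundle $\mathbb{Z}\times E_A^0$ (elements $a_i^k$) acts by $a_i^k\cdot e_{i,j,m}=e_{i,j,\hat m}$, $a_i^k|_{e_{i,j,m}}=a_j^{\hat k}$ where $kB_{ij}+m=\hat kA_{ij}+\hat m$, $0\le\hat m<A_{ij}$, extended to finite paths by $g\cdot(e\nu)=(g\cdot e)(g|_e\cdot\nu)$; $G_B$ is the quotient by elements acting trivially, and $(G_B,E_A)$ is the KEP-action. $\mu\sim_e\nu$ iff there is $(g_n)_{n<0}\subseteq G_B$ with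 $d(g_n)=r(\mu_n)$ and $g_n\cdot\mu_n\cdots\mu_{-1}=\nu_n\cdots\nu_{-1}$ for all $n<0$. *)

theory Defs
  imports Main
begin

text \<open>Vertices of E_A are 1..N. An edge e_{i,j,m} is the triple (i,j,m),
  with range r = i and source s = j. Matrices are functions nat => nat => _ ,
  only entries with indices in 1..N are relevant.\<close>

type_synonym edge = "nat \<times> nat \<times> nat"

definition er :: "edge \<Rightarrow> nat" where "er e = fst e"
definition es :: "edge \<Rightarrow> nat" where "es e = fst (snd e)"

definition katsura_pair :: "nat \<Rightarrow> (nat \<Rightarrow> nat \<Rightarrow> nat) \<Rightarrow> (nat \<Rightarrow> nat \<Rightarrow> int) \<Rightarrow> bool" where
  "katsura_pair N A B \<longleftrightarrow> (\<forall>i\<in>{1..N}. \<forall>j\<in>{1..N}. A i j = 0 \<longrightarrow> B i j = 0)"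

definition is_edge :: "nat \<Rightarrow> (nat \<Rightarrow> nat \<Rightarrow> nat) \<Rightarrow> edge \<Rightarrow> bool" where
  "is_edge N A e \<longleftrightarrow> (case e of (i, j, m) \<Rightarrow> i \<in> {1..N} \<and> j \<in> {1..N} \<and> m < A i j)"

text \<open>Left-infinite paths mu = ... mu_{-2} mu_{-1}, represented as functions on int;
  only the values at negative indices matter.\<close>
definition left_inf_path :: "nat \<Rightarrow> (nat \<Rightarrow> nat \<Rightarrow> nat) \<Rightarrow> (int \<Rightarrow> edge) \<Rightarrow> bool" where
  "left_inf_path N A \<mu> \<longleftrightarrow> (\<forall>k<0. is_edge N A (\<mu> k)) \<and> (\<forall>k< -1. es (\<mu> k) = er (\<mu> (k + 1)))"

text \<open>Action of the group bundle element a_i^k (with i the range of the first edge)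
  on a finite path e_1 e_2 ... (listed left to right): a_i^k . e_{i,j,m} = e_{i,j,mhat},
  a_i^k|_{e_{i,j,m}} = a_j^{khat}, where k B_ij + m = khat A_ij + mhat, 0 <= mhat < A_ij,
  and g.(e nu) = (g.e)(g|_e . nu).\<close>
fun kep_act :: "(nat \<Rightarrow> nat \<Rightarrow> nat) \<Rightarrow> (nat \<Rightarrow> nat \<Rightarrow> int) \<Rightarrow> int \<Rightarrow> edge list \<Rightarrow> edge list" where
  "kep_act A B k [] = []"
| "kep_act A B k ((i, j, m) # p) =
     (let t = k * B i j + int m
      in (i, j, nat (t mod int (A i j))) # kep_act A B (t div int (A i j)) p)"

definition seg :: "(int \<Rightarrow> edge) \<Rightarrow> int \<Rightarrow> edge list" where
  "seg \<mu> n = map \<mu> [n..-1]"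

text \<open>mu ~_e nu: for every n < 0 there is g in G_B with d(g) = r(mu_n) and
  g . mu_n...mu_{-1} = nu_n...nu_{-1}. Every element of G_B with d(g) = r(mu_n) is
  the class of some a_{r(mu_n)}^k (k in Z), and the action on paths is the one of
  a_{r(mu_n)}^k, so this existential is over k.\<close>
definition sim_e :: "(nat \<Rightarrow> nat \<Rightarrow> nat) \<Rightarrow> (nat \<Rightarrow> nat \<Rightarrow> int) \<Rightarrow> (int \<Rightarrow> edge) \<Rightarrow> (int \<Rightarrow> edge) \<Rightarrow> bool" where
  "sim_e A B \<mu> \<nu> \<longleftrightarrow> (\<forall>n<0. \<exists>k::int. kep_act A B k (seg \<mu> n) = seg \<nu> n)"

end

theory Submission
  imports Defs
begin

text \<open>On an edge e_{i,j,m} with B_ij = 1 the generator a^k acts by k + m = k' A_ij + m', so a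
  suitable k yields any label m' together with any prescribed restriction k'. On an edge with
  B_ij = 0 it fixes the label and restricts to a^0, which fixes the rest of the path. Hence
  mu_n...mu_{-1} can be moved onto nu_n...nu_{-1} as soon as both pass through the same
  vertices, B = 1 along mu up to its leftmost edge with B = 0, and the paths agree from that
  edge on; conversely an edge of mu with B = 0 forces agreement from there on. So if mu and
  nu differ at d, all edges of mu below d have B = 1, and the cut K + 1 is the leftmost edge
  of mu with B = 0 (K = -1 if there is none).\<close>

lemma kep_act_zero:
  "list_all (is_edge N A) p \<Longrightarrow> kep_act A B 0 p = p"
  by (induction p) (auto simp: is_edge_def)

lemma kep_act_ends:
  "map (\<lambda>e. (er e, es e)) (kep_act A B k p) = map (\<lambda>e. (er e, es e)) p"
  by (induction A B k p rule: kep_act.induct) (simp_all add: Let_def er_def es_def)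

lemma kep_act_append_fixed:
  assumes "list_all (is_edge N A) (e # q)" and "B (er e) (es e) = 0"
  shows "kep_act A B k (p @ e # q) = kep_act A B k p @ e # q"
proof (induction p arbitrary: k)
  case Nil
  obtain i j m where e: "e = (i, j, m)" by (cases e)
  have "m < A i j" and "list_all (is_edge N A) q"
    using assms(1) by (simp_all add: e is_edge_def)
  then show ?case
    using assms(2) kep_act_zero[of N A q B] by (simp add: e er_def es_def)
next
  case (Cons a p)
  then show ?case by (cases a) (simp add: Let_def)
qed

lemma kep_act_transitive:
  assumes "list_all (is_edge N A) q"
    and "map (\<lambda>e. (er e, es e)) p = map (\<lambda>e. (er e, es e)) q"
    and "\<forall>e\<in>set p. B (er e) (es e) = 1"
  shows "\<exists>k. kep_act A B k p = q"
  using assms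
proof (induction p arbitrary: q)
  case Nil
  then show ?case by simp
next
  case (Cons e p)
  obtain i j m where e: "e = (i, j, m)" by (cases e)
  obtain m' q' where q: "q = (i, j, m') # q'"
    using Cons.prems(2) by (cases q) (auto simp: e er_def es_def)
  have m': "m' < A i j" and B1: "B i j = 1"
    using Cons.prems(1,3) by (simp_all add: q e is_edge_def er_def es_def)
  obtain k' where k': "kep_act A B k' p = q'"
    using Cons.IH[of q'] Cons.prems by (auto simp: q)
  \<comment> \<open>solve k + m = k' A_ij + m' for k\<close>
  define k where "k = k' * int (A i j) + int m' - int m"
  have "k * B i j + int m = k' * int (A i j) + int m'"
    by (simp add: k_def B1)
  then have "kep_act A B k (e # p) = q"
    using m' k' by (simp add: e q Let_def)
  then show ?case by blast
qed

lemma seg_Cons: "n < 0 \<Longrightarrow> seg \<mu> n = \<mu> n # seg \<mu> (n + 1)"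
  unfolding seg_def by (simp add: upto_rec1)

lemma seg_append: "n \<le> K \<Longrightarrow> K < 0 \<Longrightarrow> seg \<mu> n = map \<mu> [n..K] @ seg \<mu> (K + 1)"
  unfolding seg_def by (simp add: upto_split2[of n K "-1"])

lemma seg_eq_iff: "seg \<mu> n = seg \<nu> n \<longleftrightarrow> (\<forall>x. n \<le> x \<and> x < 0 \<longrightarrow> \<mu> x = \<nu> x)"
  unfolding seg_def by auto

lemma left_inf_path_edges:
  "left_inf_path N A \<mu> \<Longrightarrow> \<forall>x\<in>set xs. x < 0 \<Longrightarrow> list_all (is_edge N A) (map \<mu> xs)"
  unfolding left_inf_path_def by (simp add: list_all_iff)

lemma left_inf_path_seg: "left_inf_path N A \<mu> \<Longrightarrow> list_all (is_edge N A) (seg \<mu> n)"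
  unfolding seg_def by (rule left_inf_path_edges) auto

lemma left_inf_path_er: "left_inf_path N A \<mu> \<Longrightarrow> k < 0 \<Longrightarrow> er (\<mu> k) = es (\<mu> (k - 1))"
  unfolding left_inf_path_def by (drule conjunct2, drule spec[of _ "k - 1"]) simp

lemma kep_act_append_seg_fixed:
  assumes "left_inf_path N A \<mu>" and "k < 0" and "B (er (\<mu> k)) (es (\<mu> k)) = 0"
  shows "kep_act A B c (p @ seg \<mu> k) = kep_act A B c p @ seg \<mu> k"
  using kep_act_append_fixed[of N A "\<mu> k" "seg \<mu> (k + 1)" B] assms
    left_inf_path_seg[OF assms(1), of k] by (simp add: seg_Cons)

lemma int_initial_segment_cases:
  fixes d :: int
  assumes "d < 0" and "\<forall>k\<le>d. P k"
  obtains "\<forall>k<0. P k"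
    | K where "K < -1" and "\<forall>k\<le>K. P k" and "\<not> P (K + 1)"
proof (cases "\<forall>k<0. P k")
  case False
  define S where "S = {k. k < 0 \<and> \<not> P k}"
  have "S \<noteq> {}" using False by (auto simp: S_def)
  moreover have "finite S"
    using assms(2) by (intro finite_subset[of S "{d<..<0}"]) (auto simp: S_def not_le[symmetric])
  ultimately obtain j where "j \<in> S" and j_min: "\<forall>k\<in>S. j \<le> k"
    using Min_in Min_le by blast
  then have "j - 1 < -1" and "\<not> P (j - 1 + 1)" by (simp_all add: S_def)
  moreover have "\<forall>k\<le>j - 1. P k"
  proof (intro allI impI)
    fix k assume "k \<le> j - 1"
    then have "k \<notin> S" and "k < 0" using j_min \<open>j - 1 < -1\<close> by force+
    then show "P k" by (simp add: S_def)
  qed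
  ultimately show thesis using that(2) by blast
qed

definition sim_e_cut :: "(nat \<Rightarrow> nat \<Rightarrow> int) \<Rightarrow> (int \<Rightarrow> edge) \<Rightarrow> (int \<Rightarrow> edge) \<Rightarrow> int \<Rightarrow> bool" where
  "sim_e_cut B \<mu> \<nu> K \<longleftrightarrow>
     (\<forall>k\<le>K. es (\<mu> k) = es (\<nu> k))
     \<and> (\<forall>k\<le>K. B (es (\<mu> (k - 1))) (es (\<mu> k)) = 1)
     \<and> (K < -1 \<longrightarrow> B (es (\<mu> K)) (es (\<mu> (K + 1))) = 0
                   \<and> (\<forall>k. K < k \<and> k < 0 \<longrightarrow> \<mu> k = \<nu> k))"

lemma sim_e_es:
  assumes "sim_e A B \<mu> \<nu>" and "k < 0"
  shows "es (\<mu> k) = es (\<nu> k)"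
proof -
  obtain c where "kep_act A B c (seg \<mu> k) = seg \<nu> k"
    using assms unfolding sim_e_def by blast
  then have "map (\<lambda>e. (er e, es e)) (seg \<mu> k) = map (\<lambda>e. (er e, es e)) (seg \<nu> k)"
    by (metis kep_act_ends)
  then show ?thesis by (simp add: seg_Cons assms(2))
qed

lemma sim_e_agree_from_B0:
  assumes "sim_e A B \<mu> \<nu>" and "left_inf_path N A \<mu>"
    and "k < 0" and "B (er (\<mu> k)) (es (\<mu> k)) = 0"
  shows "seg \<mu> k = seg \<nu> k"
proof -
  obtain c where "kep_act A B c (seg \<mu> k) = seg \<nu> k"
    using assms(1,3) unfolding sim_e_def by blast
  moreover have "kep_act A B c (seg \<mu> k) = seg \<mu> k"
    using kep_act_append_seg_fixed[of N A \<mu> k B c "[]"] assms(2-4) by simp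
  ultimately show ?thesis by simp
qed

lemma sim_e_imp_cut:
  assumes sim: "sim_e A B \<mu> \<nu>" and \<mu>: "left_inf_path N A \<mu>"
    and B01: "\<forall>i\<in>{1..N}. \<forall>j\<in>{1..N}. B i j \<in> {0, 1}"
  shows "(\<forall>k<0. \<mu> k = \<nu> k) \<or> (\<exists>K<0. sim_e_cut B \<mu> \<nu> K)"
proof (cases "\<forall>k<0. \<mu> k = \<nu> k")
  case False
  then obtain d where "d < 0" and "\<mu> d \<noteq> \<nu> d" by blast
  let ?free = "\<lambda>k. B (er (\<mu> k)) (es (\<mu> k)) = 1"
  have B_0_or_1: "B (er (\<mu> k)) (es (\<mu> k)) \<in> {0, 1}" if "k < 0" for k
  proof -
    obtain i j m where "\<mu> k = (i, j, m)" by (cases "\<mu> k")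
    moreover have "is_edge N A (\<mu> k)" using \<mu> that by (simp add: left_inf_path_def)
    ultimately show ?thesis using B01 by (simp add: is_edge_def er_def es_def)
  qed
  have "\<forall>k\<le>d. ?free k"
  proof (intro allI impI)
    fix k assume "k \<le> d"
    show "?free k"
    proof (rule ccontr)
      assume "\<not> ?free k"
      moreover from \<open>k \<le> d\<close> \<open>d < 0\<close> have "k < 0" by simp
      ultimately have "seg \<mu> k = seg \<nu> k"
        using B_0_or_1[of k] by (intro sim_e_agree_from_B0[OF sim \<mu>]) auto
      then show False using seg_eq_iff \<open>k \<le> d\<close> \<open>d < 0\<close> \<open>\<mu> d \<noteq> \<nu> d\<close> by blast
    qed
  qed
  have free_part: "(\<forall>k\<le>K. es (\<mu> k) = es (\<nu> k)) \<and> (\<forall>k\<le>K. B (es (\<mu> (k - 1))) (es (\<mu> k)) = 1)"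
    if "K < 0" and "\<forall>k\<le>K. ?free k" for K
    using sim_e_es[OF sim] left_inf_path_er[OF \<mu>] that by auto
  from \<open>d < 0\<close> \<open>\<forall>k\<le>d. ?free k\<close> have "\<exists>K<0. sim_e_cut B \<mu> \<nu> K"
  proof (cases rule: int_initial_segment_cases)
    case 1
    then have "sim_e_cut B \<mu> \<nu> (-1)"
      using free_part[of "-1"] unfolding sim_e_cut_def by auto
    then show ?thesis by (intro exI[of _ "-1"]) simp
  next
    case (2 K)
    then have B0: "B (er (\<mu> (K + 1))) (es (\<mu> (K + 1))) = 0" using B_0_or_1[of "K + 1"] by auto
    with 2 have "seg \<mu> (K + 1) = seg \<nu> (K + 1)"
      by (intro sim_e_agree_from_B0[OF sim \<mu>]) auto
    with 2 have "sim_e_cut B \<mu> \<nu> K"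
      using B0 free_part[of K] left_inf_path_er[OF \<mu>, of "K + 1"] seg_eq_iff[of \<mu> "K + 1" \<nu>]
      unfolding sim_e_cut_def by auto
    with \<open>K < -1\<close> show ?thesis by (intro exI[of _ K]) simp
  qed
  then show ?thesis by blast
qed simp

lemma sim_e_if_eq:
  assumes "left_inf_path N A \<mu>" and "\<forall>k<0. \<mu> k = \<nu> k"
  shows "sim_e A B \<mu> \<nu>"
  unfolding sim_e_def
proof (intro allI impI exI)
  fix n :: int
  show "kep_act A B 0 (seg \<mu> n) = seg \<nu> n"
    using kep_act_zero[OF left_inf_path_seg[OF assms(1)]] assms(2) seg_eq_iff[of \<mu> n \<nu>] by metis
qed

lemma sim_e_if_cut:
  assumes \<mu>: "left_inf_path N A \<mu>" and \<nu>: "left_inf_path N A \<nu>"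
    and "K < 0" and cut: "sim_e_cut B \<mu> \<nu> K"
  shows "sim_e A B \<mu> \<nu>"
  unfolding sim_e_def
proof (intro allI impI)
  fix n :: int assume "n < 0"
  have same_ends: "(er (\<mu> k), es (\<mu> k)) = (er (\<nu> k), es (\<nu> k))"
    and free: "B (er (\<mu> k)) (es (\<mu> k)) = 1" if "k \<le> K" for k
    using cut that \<open>K < 0\<close> left_inf_path_er[OF \<mu>, of k] left_inf_path_er[OF \<nu>, of k]
    unfolding sim_e_cut_def by auto
  consider "K = -1"
    | "K < -1" and "B (er (\<mu> (K + 1))) (es (\<mu> (K + 1))) = 0"
      and "\<forall>k. K < k \<and> k < 0 \<longrightarrow> \<mu> k = \<nu> k"
    using cut \<open>K < 0\<close> left_inf_path_er[OF \<mu>, of "K + 1"] unfolding sim_e_cut_def by fastforce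
  note K_cases = this
  have tail: "seg \<mu> (K + 1) = seg \<nu> (K + 1)"
    by (cases rule: K_cases) (auto simp: seg_def)
  have fixed: "kep_act A B c (p @ seg \<mu> (K + 1)) = kep_act A B c p @ seg \<mu> (K + 1)" for c p
  proof (cases rule: K_cases)
    case 1
    then show ?thesis by (simp add: seg_def)
  next
    case 2
    then show ?thesis by (intro kep_act_append_seg_fixed[OF \<mu>]) auto
  qed
  show "\<exists>c. kep_act A B c (seg \<mu> n) = seg \<nu> n"
  proof (cases "n \<le> K")
    case True
    have "\<exists>c. kep_act A B c (map \<mu> [n..K]) = map \<nu> [n..K]"
      using \<open>K < 0\<close> same_ends free
      by (intro kep_act_transitive[of N] left_inf_path_edges[OF \<nu>]) auto
    then show ?thesis
      using seg_append[OF True \<open>K < 0\<close>] tail fixed by metis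
  next
    case False
    with tail have "seg \<mu> n = seg \<nu> n" by (simp add: seg_eq_iff)
    then show ?thesis using kep_act_zero[OF left_inf_path_seg[OF \<mu>]] by metis
  qed
qed

theorem proposition6p2:
  fixes N :: nat and A :: "nat \<Rightarrow> nat \<Rightarrow> nat" and B :: "nat \<Rightarrow> nat \<Rightarrow> int"
    and \<mu> \<nu> :: "int \<Rightarrow> edge"
  assumes "katsura_pair N A B"
    and "\<forall>i\<in>{1..N}. \<forall>j\<in>{1..N}. B i j \<in> {0, 1}"
    and "left_inf_path N A \<mu>" and "left_inf_path N A \<nu>"
  shows "sim_e A B \<mu> \<nu> \<longleftrightarrow>
    ((\<forall>k<0. \<mu> k = \<nu> k) \<or>
     (\<exists>K<0. (\<forall>k\<le>K. es (\<mu> k) = es (\<nu> k))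
        \<and> (\<forall>k\<le>K. B (es (\<mu> (k - 1))) (es (\<mu> k)) = 1)
        \<and> (K < -1 \<longrightarrow> B (es (\<mu> K)) (es (\<mu> (K + 1))) = 0
                      \<and> (\<forall>k. K < k \<and> k < 0 \<longrightarrow> \<mu> k = \<nu> k))))"
proof -
  have "sim_e A B \<mu> \<nu> \<longleftrightarrow> (\<forall>k<0. \<mu> k = \<nu> k) \<or> (\<exists>K<0. sim_e_cut B \<mu> \<nu> K)"
    using sim_e_imp_cut[OF _ assms(3,2)] sim_e_if_eq[OF assms(3)] sim_e_if_cut[OF assms(3,4)]
    by blast
  then show ?thesis unfolding sim_e_cut_def .
qed

end
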